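(* Let $\Phi:\mathbb{R}^2\to\mathbb{R}^2$, $\Phi(u,v)=(\varphi(u,v),\psi(u,v))$, where $\varphi$ and $\psi$ are harmonic functions on $\mathbb{R}^2$. Then $\inf_{\mathbb{R}^2}|J_\Phi|=0$, where $J_\Phi=\varphi_u\psi_v-\varphi_v\psi_u$, unless $\Phi$ is an affine map. *)

theory Defs
  imports "HOL-Analysis.Analysis"
begin

definition pu :: "(real \<times> real \<Rightarrow> real) \<Rightarrow> real \<times> real \<Rightarrow> real" where
  "pu f p = deriv (\<lambda>s. f (s, snd p)) (fst p)"

definition pv :: "(real \<times> real \<Rightarrow> real) \<Rightarrow> real \<times> real \<Rightarrow> real" where
  "pv f p = deriv (\<lambda>t. f (fst p, t)) (snd p)"

definition C2_plane :: "(real \<times> real \<Rightarrow> real) \<Rightarrow> bool" where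
  "C2_plane f \<longleftrightarrow>
     (\<forall>p. f differentiable (at p)) \<and>
     (\<forall>p. pu f differentiable (at p)) \<and>
     (\<forall>p. pv f differentiable (at p)) \<and>
     continuous_on UNIV (pu (pu f)) \<and> continuous_on UNIV (pv (pu f)) \<and>
     continuous_on UNIV (pu (pv f)) \<and> continuous_on UNIV (pv (pv f))"

definition harmonic_plane :: "(real \<times> real \<Rightarrow> real) \<Rightarrow> bool" where
  "harmonic_plane f \<longleftrightarrow> C2_plane f \<and> (\<forall>p. pu (pu f) p + pv (pv f) p = 0)"

definition jac :: "(real \<times> real \<Rightarrow> real) \<Rightarrow> (real \<times> real \<Rightarrow> real) \<Rightarrow> real \<times> real \<Rightarrow> real" where
  "jac \<phi> \<psi> p = pu \<phi> p * pv \<psi> p - pv \<phi> p * pu \<psi> p"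

definition affine_map_plane :: "(real \<times> real \<Rightarrow> real) \<Rightarrow> (real \<times> real \<Rightarrow> real) \<Rightarrow> bool" where
  "affine_map_plane \<phi> \<psi> \<longleftrightarrow>
     (\<exists>a b c d e g. \<forall>u v. \<phi> (u, v) = a * u + b * v + c \<and> \<psi> (u, v) = d * u + e * v + g)"

end

theory Submission imports Defs "HOL-Complex_Analysis.Complex_Analysis" begin

text \<open>If \<open>\<phi>\<close> and \<open>\<psi>\<close> are harmonic, the functions \<open>\<phi>\<^sub>u - i\<phi>\<^sub>v\<close> and \<open>\<psi>\<^sub>u - i\<psi>\<^sub>v\<close> are entire, and so are
  \<open>H = \<phi>\<^sub>u - i\<phi>\<^sub>v + i(\<psi>\<^sub>u - i\<psi>\<^sub>v)\<close> and \<open>K = \<phi>\<^sub>u - i\<phi>\<^sub>v - i(\<psi>\<^sub>u - i\<psi>\<^sub>v)\<close>, which satisfy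
  \<open>4 J\<^sub>\<Phi> = |H|\<^sup>2 - |K|\<^sup>2\<close>. If \<open>|J\<^sub>\<Phi>| \<ge> m > 0\<close>, then by continuity \<open>J\<^sub>\<Phi>\<close> has a constant sign, say
  \<open>|H|\<^sup>2 \<ge> |K|\<^sup>2 + 4m\<close>. Then \<open>1/H\<close> is bounded, so \<open>H\<close> is constant by Liouville, hence \<open>K\<close> is
  bounded and constant as well. So both gradients are constant and \<open>\<Phi>\<close> is affine.\<close>

lemma has_derivative_imp_partials:
  assumes "(f has_derivative D) (at (x,y))"
  shows "((\<lambda>s. f (s,y)) has_real_derivative D (1,0)) (at x)"
    and "((\<lambda>t. f (x,t)) has_real_derivative D (0,1)) (at y)"
proof -
  have lin: "linear D" using assms has_derivative_linear by blast
  have "((\<lambda>s. (s,y)) has_derivative (\<lambda>h. (h,0))) (at x)"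
    by (auto intro!: derivative_eq_intros)
  from has_derivative_compose[OF this assms]
  have "((\<lambda>s. f (s,y)) has_derivative (\<lambda>h. D (h,0))) (at x)" by simp
  moreover have "(\<lambda>h. D (h,0)) = (*) (D (1,0))"
  proof
    fix h show "D (h,0) = D (1,0) * h"
      using linear_scale[OF lin, of h "(1,0)"] by (simp add: mult.commute)
  qed
  ultimately show "((\<lambda>s. f (s,y)) has_real_derivative D (1,0)) (at x)"
    unfolding has_field_derivative_def by simp
  have "((\<lambda>t. (x,t)) has_derivative (\<lambda>h. (0,h))) (at y)"
    by (auto intro!: derivative_eq_intros)
  from has_derivative_compose[OF this assms]
  have "((\<lambda>t. f (x,t)) has_derivative (\<lambda>h. D (0,h))) (at y)" by simp
  moreover have "(\<lambda>h. D (0,h)) = (*) (D (0,1))"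
  proof
    fix h show "D (0,h) = D (0,1) * h"
      using linear_scale[OF lin, of h "(0,1)"] by (simp add: mult.commute)
  qed
  ultimately show "((\<lambda>t. f (x,t)) has_real_derivative D (0,1)) (at y)"
    unfolding has_field_derivative_def by simp
qed

lemma
  assumes "f differentiable (at p)"
  shows has_real_derivative_pu: "((\<lambda>s. f (s, snd p)) has_real_derivative pu f p) (at (fst p))"
    and has_real_derivative_pv: "((\<lambda>t. f (fst p, t)) has_real_derivative pv f p) (at (snd p))"
    and has_derivative_pu_pv: "(f has_derivative (\<lambda>h. pu f p * fst h + pv f p * snd h)) (at p)"
proof -
  obtain D where D: "(f has_derivative D) (at p)" using assms differentiable_def by blast
  obtain x y where p: "p = (x,y)" by (cases p)
  note partials = has_derivative_imp_partials[OF D[unfolded p]]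
  have pu: "pu f p = D (1,0)" unfolding pu_def p using DERIV_imp_deriv[OF partials(1)] by simp
  have pv: "pv f p = D (0,1)" unfolding pv_def p using DERIV_imp_deriv[OF partials(2)] by simp
  show "((\<lambda>s. f (s, snd p)) has_real_derivative pu f p) (at (fst p))"
    and "((\<lambda>t. f (fst p, t)) has_real_derivative pv f p) (at (snd p))"
    using partials pu pv p by simp_all
  have lin: "linear D" using D has_derivative_linear by blast
  have "D h = pu f p * fst h + pv f p * snd h" for h
  proof -
    have "D h = D (fst h *\<^sub>R (1,0) + snd h *\<^sub>R (0,1))" by (cases h) simp
    also have "\<dots> = fst h *\<^sub>R D (1,0) + snd h *\<^sub>R D (0,1)"
      by (simp only: linear_add[OF lin] linear_scale[OF lin])
    finally show ?thesis using pu pv by (simp add: mult.commute)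
  qed
  then have "D = (\<lambda>h. pu f p * fst h + pv f p * snd h)" by (rule ext)
  then show "(f has_derivative (\<lambda>h. pu f p * fst h + pv f p * snd h)) (at p)"
    using D by simp
qed

lemma second_difference_eq_pv_pu:
  assumes "\<And>p. f differentiable (at p)" and "\<And>p. pu f differentiable (at p)" and "h > 0"
  obtains \<xi> \<eta> where "x < \<xi>" "\<xi> < x + h" "y < \<eta>" "\<eta> < y + h"
    and "f (x+h, y+h) - f (x+h, y) - f (x, y+h) + f (x, y) = h * h * pv (pu f) (\<xi>, \<eta>)"
proof -
  have "DERIV (\<lambda>s. f (s, y+h) - f (s, y)) s :> pu f (s, y+h) - pu f (s, y)" for s
    using has_real_derivative_pu[OF assms(1), of "(_, y+h)"] has_real_derivative_pu[OF assms(1), of "(_, y)"]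
    by (auto intro!: derivative_eq_intros)
  from MVT2[of x "x+h", OF _ this] assms(3) obtain \<xi> where \<xi>: "x < \<xi>" "\<xi> < x + h"
    "f (x+h, y+h) - f (x+h, y) - (f (x, y+h) - f (x, y)) = h * (pu f (\<xi>, y+h) - pu f (\<xi>, y))"
    by auto
  have "DERIV (\<lambda>t. pu f (\<xi>, t)) t :> pv (pu f) (\<xi>, t)" for t
    using has_real_derivative_pv[OF assms(2), of "(\<xi>, _)"] by simp
  from MVT2[of y "y+h", OF _ this] assms(3) obtain \<eta> where \<eta>: "y < \<eta>" "\<eta> < y + h"
    "pu f (\<xi>, y+h) - pu f (\<xi>, y) = h * pv (pu f) (\<xi>, \<eta>)"
    by auto
  show thesis using that[OF \<xi>(1,2) \<eta>(1,2)] \<xi>(3) \<eta>(3) by simp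
qed

lemma second_difference_eq_pu_pv:
  assumes "\<And>p. f differentiable (at p)" and "\<And>p. pv f differentiable (at p)" and "h > 0"
  obtains \<xi> \<eta> where "x < \<xi>" "\<xi> < x + h" "y < \<eta>" "\<eta> < y + h"
    and "f (x+h, y+h) - f (x+h, y) - f (x, y+h) + f (x, y) = h * h * pu (pv f) (\<xi>, \<eta>)"
proof -
  have "DERIV (\<lambda>t. f (x+h, t) - f (x, t)) t :> pv f (x+h, t) - pv f (x, t)" for t
    using has_real_derivative_pv[OF assms(1), of "(x+h, _)"] has_real_derivative_pv[OF assms(1), of "(x, _)"]
    by (auto intro!: derivative_eq_intros)
  from MVT2[of y "y+h", OF _ this] assms(3) obtain \<eta> where \<eta>: "y < \<eta>" "\<eta> < y + h"
    "f (x+h, y+h) - f (x, y+h) - (f (x+h, y) - f (x, y)) = h * (pv f (x+h, \<eta>) - pv f (x, \<eta>))"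
    by auto
  have "DERIV (\<lambda>s. pv f (s, \<eta>)) s :> pu (pv f) (s, \<eta>)" for s
    using has_real_derivative_pu[OF assms(2), of "(_, \<eta>)"] by simp
  from MVT2[of x "x+h", OF _ this] assms(3) obtain \<xi> where \<xi>: "x < \<xi>" "\<xi> < x + h"
    "pv f (x+h, \<eta>) - pv f (x, \<eta>) = h * pu (pv f) (\<xi>, \<eta>)"
    by auto
  show thesis using that[OF \<xi>(1,2) \<eta>(1,2)] \<xi>(3) \<eta>(3) by (simp add: algebra_simps)
qed

lemma dist_lt_in_open_square:
  fixes a b x y h :: real
  assumes "x < a" "a < x + h" "y < b" "b < y + h"
  shows "dist (a, b) (x, y) < 2 * h"
proof -
  have "dist (a, b) (x, y) \<le> \<bar>a - x\<bar> + \<bar>b - y\<bar>"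
    using norm_Pair_le[of "a - x" "b - y"] by (simp add: dist_norm)
  then show ?thesis using assms by linarith
qed

lemma pv_pu_eq_pu_pv:
  assumes "C2_plane f"
  shows "pv (pu f) p = pu (pv f) p"
proof -
  have df: "\<And>p. f differentiable (at p)" and dfu: "\<And>p. pu f differentiable (at p)"
    and dfv: "\<And>p. pv f differentiable (at p)"
    and cuv: "continuous_on UNIV (pv (pu f))" and cvu: "continuous_on UNIV (pu (pv f))"
    using assms unfolding C2_plane_def by auto
  have "\<bar>pv (pu f) p - pu (pv f) p\<bar> < e" if "e > 0" for e
  proof -
    obtain d1 where d1: "d1 > 0" "\<And>q. dist q p < d1 \<Longrightarrow> \<bar>pv (pu f) q - pv (pu f) p\<bar> < e/2"
      using cuv \<open>e > 0\<close> unfolding continuous_on_iff dist_real_def by (meson UNIV_I half_gt_zero)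
    obtain d2 where d2: "d2 > 0" "\<And>q. dist q p < d2 \<Longrightarrow> \<bar>pu (pv f) q - pu (pv f) p\<bar> < e/2"
      using cvu \<open>e > 0\<close> unfolding continuous_on_iff dist_real_def by (meson UNIV_I half_gt_zero)
    define h where "h = min d1 d2 / 2"
    have "h > 0" using d1 d2 by (simp add: h_def)
    obtain x y where p: "p = (x, y)" by (cases p)
    obtain \<xi> \<eta> where \<xi>\<eta>: "x < \<xi>" "\<xi> < x + h" "y < \<eta>" "\<eta> < y + h"
      and uv: "f (x+h, y+h) - f (x+h, y) - f (x, y+h) + f (x, y) = h * h * pv (pu f) (\<xi>, \<eta>)"
      using second_difference_eq_pv_pu[OF df dfu \<open>h > 0\<close>] .
    obtain \<xi>' \<eta>' where \<xi>\<eta>': "x < \<xi>'" "\<xi>' < x + h" "y < \<eta>'" "\<eta>' < y + h"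
      and vu: "f (x+h, y+h) - f (x+h, y) - f (x, y+h) + f (x, y) = h * h * pu (pv f) (\<xi>', \<eta>')"
      using second_difference_eq_pu_pv[OF df dfv \<open>h > 0\<close>] .
    have same: "pv (pu f) (\<xi>, \<eta>) = pu (pv f) (\<xi>', \<eta>')"
      using uv vu \<open>h > 0\<close> by simp
    have "dist (\<xi>, \<eta>) p < d1" "dist (\<xi>', \<eta>') p < d2"
      using dist_lt_in_open_square[OF \<xi>\<eta>] dist_lt_in_open_square[OF \<xi>\<eta>'] p
      by (auto simp: h_def)
    then have "\<bar>pv (pu f) (\<xi>, \<eta>) - pv (pu f) p\<bar> < e/2" "\<bar>pu (pv f) (\<xi>', \<eta>') - pu (pv f) p\<bar> < e/2"
      using d1(2) d2(2) by blast+
    then show ?thesis using same by linarith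
  qed
  from this[of "\<bar>pv (pu f) p - pu (pv f) p\<bar>"] show ?thesis by fastforce
qed

text \<open>\<open>complex_gradient \<phi> = \<phi>\<^sub>u - i\<phi>\<^sub>v\<close> is twice the Wirtinger derivative \<open>\<partial>\<phi>/\<partial>z\<close>; its Cauchy-Riemann
  equations are the Laplace equation and the symmetry of the mixed partials of \<open>\<phi>\<close>.\<close>

definition complex_gradient :: "(real \<times> real \<Rightarrow> real) \<Rightarrow> complex \<Rightarrow> complex" where
  "complex_gradient \<phi> z = Complex (pu \<phi> (Re z, Im z)) (- pv \<phi> (Re z, Im z))"

lemma has_field_derivative_complex_gradient:
  assumes "harmonic_plane \<phi>"
  shows "(complex_gradient \<phi> has_field_derivative
           Complex (pu (pu \<phi>) (Re z, Im z)) (- pu (pv \<phi>) (Re z, Im z))) (at z)"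
proof -
  define q where "q = (Re z, Im z)"
  have C: "C2_plane \<phi>" and "pu (pu \<phi>) q + pv (pv \<phi>) q = 0"
    using assms unfolding harmonic_plane_def by blast+
  then have laplace: "pv (pv \<phi>) q = - pu (pu \<phi>) q" by linarith
  have dfu: "pu \<phi> differentiable (at q)" and dfv: "pv \<phi> differentiable (at q)"
    using C unfolding C2_plane_def by blast+
  have dRI: "((\<lambda>z. (Re z, Im z)) has_derivative (\<lambda>k. (Re k, Im k))) (at z)"
    by (auto intro!: derivative_eq_intros)
  have "((\<lambda>z. pu \<phi> (Re z, Im z)) has_derivative
      (\<lambda>k. pu (pu \<phi>) q * Re k + pv (pu \<phi>) q * Im k)) (at z)"
    using has_derivative_compose[OF dRI has_derivative_pu_pv[OF dfu[unfolded q_def]]]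
    by (simp add: q_def)
  moreover have "((\<lambda>z. pv \<phi> (Re z, Im z)) has_derivative
      (\<lambda>k. pu (pv \<phi>) q * Re k + pv (pv \<phi>) q * Im k)) (at z)"
    using has_derivative_compose[OF dRI has_derivative_pu_pv[OF dfv[unfolded q_def]]]
    by (simp add: q_def)
  ultimately have "((\<lambda>z. of_real (pu \<phi> (Re z, Im z)) + \<i> * of_real (- pv \<phi> (Re z, Im z)))
      has_derivative (\<lambda>k. of_real (pu (pu \<phi>) q * Re k + pv (pu \<phi>) q * Im k)
        + \<i> * of_real (- (pu (pv \<phi>) q * Re k + pv (pv \<phi>) q * Im k)))) (at z)"
    by (intro has_derivative_add has_derivative_mult_right has_derivative_of_real has_derivative_minus)
  moreover have "(\<lambda>z. of_real (pu \<phi> (Re z, Im z)) + \<i> * of_real (- pv \<phi> (Re z, Im z)))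
      = complex_gradient \<phi>"
    by (auto simp: complex_gradient_def complex_eq_iff)
  moreover have "(\<lambda>k. of_real (pu (pu \<phi>) q * Re k + pv (pu \<phi>) q * Im k)
        + \<i> * of_real (- (pu (pv \<phi>) q * Re k + pv (pv \<phi>) q * Im k)))
      = (*) (Complex (pu (pu \<phi>) q) (- pu (pv \<phi>) q))"
    unfolding laplace pv_pu_eq_pu_pv[OF C] by (simp add: fun_eq_iff complex_eq_iff algebra_simps)
  ultimately show ?thesis unfolding has_field_derivative_def q_def by simp
qed

lemma holomorphic_complex_gradient: "harmonic_plane \<phi> \<Longrightarrow> complex_gradient \<phi> holomorphic_on UNIV"
  using has_field_derivative_complex_gradient holomorphic_on_def field_differentiable_def by blast

lemma jac_eq_diff_norm_squares:
  "4 * jac \<phi> \<psi> (Re z, Im z)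
     = (norm (complex_gradient \<phi> z + \<i> * complex_gradient \<psi> z))\<^sup>2
       - (norm (complex_gradient \<phi> z - \<i> * complex_gradient \<psi> z))\<^sup>2"
  unfolding cmod_power2 by (simp add: complex_gradient_def jac_def power2_eq_square algebra_simps)

lemma affine_if_constant_partials:
  assumes "\<And>p. f differentiable (at p)" and "\<And>p. pu f p = a" and "\<And>p. pv f p = b"
  shows "f (u, v) = a * u + b * v + f (0, 0)"
proof -
  define g where "g = (\<lambda>x. f x - (a * fst x + b * snd x))"
  have "(g has_derivative (\<lambda>h. 0)) (at x within UNIV)" for x
  proof -
    have "(g has_derivative (\<lambda>h. (pu f x * fst h + pv f x * snd h) - (a * fst h + b * snd h))) (at x)"
      unfolding g_def by (auto intro!: derivative_eq_intros has_derivative_pu_pv[OF assms(1)])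
    then show ?thesis using assms(2,3) by simp
  qed
  from has_derivative_zero_constant[OF convex_UNIV this] obtain c where "\<And>x. g x = c" by blast
  then have "g (u, v) = g (0, 0)" by simp
  then show ?thesis by (simp add: g_def)
qed

lemma affine_if_complex_gradient_constant:
  assumes "\<And>p. f differentiable (at p)" and "\<And>z. complex_gradient f z = w"
  shows "\<exists>a b c. \<forall>u v. f (u, v) = a * u + b * v + c"
proof -
  have "pu f p = Re w" "pv f p = - Im w" for p
    using assms(2)[of "Complex (fst p) (snd p)"] by (auto simp: complex_gradient_def)
  then show ?thesis using affine_if_constant_partials[OF assms(1)] by blast
qed

lemma constant_sign_if_abs_ge:
  fixes g :: "'a::real_normed_vector \<Rightarrow> real"
  assumes "continuous_on UNIV g" and "m > 0" and "\<And>x. m \<le> \<bar>g x\<bar>"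
  shows "(\<forall>x. m \<le> g x) \<or> (\<forall>x. g x \<le> - m)"
proof (rule ccontr)
  assume "\<not> ?thesis"
  then obtain x y where "g x < m" "- m < g y" by (auto simp: not_le)
  then have "g x \<le> 0" "0 \<le> g y"
    using assms(3)[of x] assms(3)[of y] by (auto simp: abs_if split: if_splits)
  moreover have "connected (range g)"
    using connected_continuous_image[OF assms(1) connected_UNIV] .
  ultimately have "0 \<in> range g"
    unfolding connected_iff_interval by blast
  then obtain r where "g r = 0" by auto
  then show False using assms(2) assms(3)[of r] by simp
qed

lemma entire_constant_if_norm_square_gap:
  fixes H K :: "complex \<Rightarrow> complex"
  assumes "H holomorphic_on UNIV" and "K holomorphic_on UNIV" and "e > 0"
    and gap: "\<And>z. (norm (K z))\<^sup>2 + e \<le> (norm (H z))\<^sup>2"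
  shows "\<exists>a b. \<forall>z. H z = a \<and> K z = b"
proof -
  have He: "e \<le> (norm (H z))\<^sup>2" for z using gap[of z] zero_le_power2[of "norm (K z)"] by linarith
  then have "H z \<noteq> 0" for z using \<open>e > 0\<close> by (metis norm_zero not_le zero_power2)
  then have "(\<lambda>z. inverse (H z)) holomorphic_on UNIV" using assms(1) by (auto intro!: holomorphic_intros)
  moreover have "norm (inverse (H z)) \<le> inverse (sqrt e)" for z
  proof -
    have "sqrt e \<le> norm (H z)" using He[of z] by (simp add: real_le_lsqrt)
    then show ?thesis using \<open>e > 0\<close> by (simp add: norm_inverse le_imp_inverse_le)
  qed
  then have "bounded (range (\<lambda>z. inverse (H z)))" unfolding bounded_iff by blast
  ultimately obtain c where c: "\<And>z. inverse (H z) = c"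
    using Liouville_theorem unfolding constant_on_def by blast
  define a where "a = inverse c"
  have Ha: "H z = a" for z using c[of z] by (metis a_def inverse_inverse_eq)
  have "norm (K z) \<le> norm a" for z
  proof -
    have "(norm (K z))\<^sup>2 \<le> (norm a)\<^sup>2" using gap[of z] \<open>e > 0\<close> unfolding Ha by linarith
    then show ?thesis by (rule power2_le_imp_le) simp
  qed
  then have "bounded (range K)" unfolding bounded_iff by blast
  then obtain b where "\<And>z. K z = b"
    using Liouville_theorem[OF assms(2)] unfolding constant_on_def by blast
  then show ?thesis using Ha by blast
qed

lemma entire_constant_if_norm_squares_apart:
  fixes H K :: "complex \<Rightarrow> complex"
  assumes hH: "H holomorphic_on UNIV" and hK: "K holomorphic_on UNIV" and "e > 0"
    and apart: "\<And>z. e \<le> \<bar>(norm (H z))\<^sup>2 - (norm (K z))\<^sup>2\<bar>"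
  shows "\<exists>a b. \<forall>z. H z = a \<and> K z = b"
proof -
  have "continuous_on UNIV (\<lambda>z. (norm (H z))\<^sup>2 - (norm (K z))\<^sup>2)"
    using holomorphic_on_imp_continuous_on[OF hH] holomorphic_on_imp_continuous_on[OF hK]
    by (intro continuous_intros)
  from constant_sign_if_abs_ge[OF this \<open>e > 0\<close> apart] show ?thesis
  proof (elim disjE)
    assume "\<forall>z. e \<le> (norm (H z))\<^sup>2 - (norm (K z))\<^sup>2"
    then have "(norm (K z))\<^sup>2 + e \<le> (norm (H z))\<^sup>2" for z by (simp add: algebra_simps)
    then show ?thesis using entire_constant_if_norm_square_gap[OF hH hK \<open>e > 0\<close>] by blast
  next
    assume "\<forall>z. (norm (H z))\<^sup>2 - (norm (K z))\<^sup>2 \<le> - e"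
    then have "(norm (H z))\<^sup>2 + e \<le> (norm (K z))\<^sup>2" for z by (simp add: algebra_simps)
    then show ?thesis using entire_constant_if_norm_square_gap[OF hK hH \<open>e > 0\<close>] by blast
  qed
qed

lemma affine_map_plane_if_abs_jac_ge:
  assumes "harmonic_plane \<phi>" and "harmonic_plane \<psi>"
    and "m > 0" and "\<And>p. m \<le> \<bar>jac \<phi> \<psi> p\<bar>"
  shows "affine_map_plane \<phi> \<psi>"
proof -
  define H where "H = (\<lambda>z. complex_gradient \<phi> z + \<i> * complex_gradient \<psi> z)"
  define K where "K = (\<lambda>z. complex_gradient \<phi> z - \<i> * complex_gradient \<psi> z)"
  have "H holomorphic_on UNIV" "K holomorphic_on UNIV"
    unfolding H_def K_def using assms(1,2)
    by (auto intro!: holomorphic_intros holomorphic_complex_gradient)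
  moreover have "4 * m \<le> \<bar>(norm (H z))\<^sup>2 - (norm (K z))\<^sup>2\<bar>" for z
    using assms(4)[of "(Re z, Im z)"] unfolding H_def K_def jac_eq_diff_norm_squares[symmetric]
    by simp
  ultimately obtain a b where "\<And>z. H z = a" "\<And>z. K z = b"
    using entire_constant_if_norm_squares_apart[of H K "4 * m"] \<open>m > 0\<close> by auto
  then have "complex_gradient \<phi> z = (a + b) / 2" "complex_gradient \<psi> z = (a - b) / (2 * \<i>)" for z
    by (auto simp: H_def K_def field_simps)
  moreover have "\<phi> differentiable (at p)" "\<psi> differentiable (at p)" for p
    using assms(1,2) unfolding harmonic_plane_def C2_plane_def by blast+
  ultimately show ?thesis
    unfolding affine_map_plane_def using affine_if_complex_gradient_constant by metis
qed

theorem lemma3p2: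
  fixes \<phi> \<psi> :: "real \<times> real \<Rightarrow> real"
  assumes "harmonic_plane \<phi>" and "harmonic_plane \<psi>"
    and "\<not> affine_map_plane \<phi> \<psi>"
  shows "(INF p. \<bar>jac \<phi> \<psi> p\<bar>) = 0"
proof -
  define m where "m = (INF p. \<bar>jac \<phi> \<psi> p\<bar>)"
  have "m \<ge> 0" unfolding m_def by (rule cINF_greatest) auto
  moreover have "m \<le> \<bar>jac \<phi> \<psi> p\<bar>" for p
    unfolding m_def by (rule cINF_lower) (auto intro: bdd_belowI[of _ 0])
  then have "\<not> m > 0"
    using affine_map_plane_if_abs_jac_ge[OF assms(1,2)] assms(3) by blast
  ultimately show ?thesis unfolding m_def by simp
qed

end
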